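(* Suppose Assumption A holds and Assumption B holds for some $p\ge2$. Let $\{(x^k,m^k)\}_{k\ge0}$ be generated by Algorithm 1 with $q=p-1$, step sizes $\{\eta_k\}_{k\ge0}$, and parameters satisfying, for all $k\ge0$, $\sum_{t=1}^{p-1}\theta_{k,t}/\gamma_{k,t}^{j}=1$ for $j=1,\dots,p-1$ and $\sum_{t=1}^{p-1}\theta_{k,t}\in(0,1)$. Let $\{p_k\}_{k\ge0}$ be a positive sequence with \[ \Big(1-\sum_{t=1}^{p-1}\theta_{k,t}\Big)p_{k+1}\le\Big(1-\frac{1}{p+1}\sum_{t=1}^{p-1}\theta_{k,t}\Big)p_k\qquad\forall k\ge0, \] and define $P_k=f(x^k)+p_k\|m^k-\nabla f(x^k)\|^2$. Then for all $k\ge0$, \[ \mathbb{E}_{\xi^{k+1}}[P_{k+1}]\le P_k-\eta_k\|\nabla f(x^k)\|+\frac{L_1}{2}\eta_k^2+\frac{(p+1)\eta_k^2}{p_k\sum_{t=1}^{p-1}\theta_{k,t}}+\frac{pL_p^2\eta_k^{2p}p_{k+1}}{(p!)^2\sum_{t=1}^{p-1}\theta_{k,t}}\Big(1+\sum_{t=1}^{p-1}\frac{\theta_{k,t}^2}{\gamma_{k,t}^{2p}}\Big)+(p-1)\sigma^2p_{k+1}\sum_{t=1}^{p-1}\theta_{k,t}^2 . \]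
   Context: Problem: minimize $f:\mathbb{R}^n\to\mathbb{R}$, where only a stochastic gradient estimator $G(\cdot;\xi)$ is accessible, $\xi$ being a random variable with sample space $\Xi$. $\|\cdot\|$ is the Euclidean norm. Assumption A: (a) there is a finite $f_{\mathrm{low}}$ with $f(x)\ge f_{\mathrm{low}}$ for all $x$; (b) there is $L_1>0$ with $\|\nabla f(y)-\nabla f(x)\|\le L_1\|y-x\|$ for all $x,y$; (c) $\mathbb{E}_\xi[G(x;\xi)]=\nabla f(x)$ and $\mathbb{E}_\xi[\|G(x;\xi)-\nabla f(x)\|^2]\le\sigma^2$ for all $x$, for some $\sigma>0$. Assumption B: $f$ is $p$ times continuously differentiable for some $p\ge2$ and there is $L_p>0$ with $\|D^pf(y)-D^pf(x)\|_{(p)}\le L_p\|y-x\|$ for all $x,y$, where $D^pf(x)$ is the $p$th derivative as a symmetric $p$-linear form and $\|\mathcal{T}\|_{(p)}=\max\{\mathcal{T}[h_1,\dots,h_p]:\|h_i\|\le 1\}$. Algorithm 1 (SFOM with multi-extrapolated momentum): inputs $x^0\in\mathbb{R}^n$, step sizes $\eta_k>0$, an integer $q\ge1$, extrapolation parameters $\gamma_{k,t}\in(0,1)$ and weighting parameters $\theta_{k,t}\in\mathbb{R}$ ($1\le t\le q$, $k\ge0$) with $\sum_{t=1}^q\theta_{k,t}\in(0,1)$ for all $k\ge0$. Initialize $x^{-1}=x^0$, $m^{-1}=0$, $(\gamma_{-1,t},\theta_{-1,t})=(1,1/q)$ for all $t$. For $k=0,1,2,\dots$: $z^{k,t}=x^k+\frac{1-\gamma_{k-1,t}}{\gamma_{k-1,t}}(x^k-x^{k-1})$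 for $1\le t\le q$; $m^k=(1-\sum_{t=1}^q\theta_{k-1,t})m^{k-1}+\sum_{t=1}^q\theta_{k-1,t}G(z^{k,t};\xi^k)$; $x^{k+1}=x^k-\eta_k m^k/\|m^k\|$. Here $\xi^0,\xi^1,\dots$ are independent samples of $\xi$ (and $m^k\neq0$ is implicitly assumed). $\mathbb{E}_{\xi^{k+1}}[\cdot]$ denotes expectation with respect to $\xi^{k+1}$ conditional on $\xi^0,\dots,\xi^k$. *)

theory Defs
  imports "HOL-Probability.Probability"
begin

text \<open>Iterated (Frechet) derivative as a k-linear form:
  hderiv k f x h = D^k f(x)[h 0, ..., h (k-1)].\<close>
fun hderiv :: "nat \<Rightarrow> ('a::euclidean_space \<Rightarrow> real) \<Rightarrow> 'a \<Rightarrow> (nat \<Rightarrow> 'a) \<Rightarrow> real" where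
  "hderiv 0 f x h = f x"
| "hderiv (Suc k) f x h = frechet_derivative (\<lambda>y. hderiv k f y h) (at x) (h k)"

definition Cp :: "nat \<Rightarrow> ('a::euclidean_space \<Rightarrow> real) \<Rightarrow> bool" where
  "Cp p f \<longleftrightarrow> (\<forall>k<p. \<forall>h x. (\<lambda>y. hderiv k f y h) differentiable (at x))
              \<and> (\<forall>h. continuous_on UNIV (\<lambda>y. hderiv p f y h))"

definition pnorm :: "nat \<Rightarrow> ((nat \<Rightarrow> 'a::real_normed_vector) \<Rightarrow> real) \<Rightarrow> real" where
  "pnorm p T = Sup {T h | h. \<forall>i<p. norm (h i) \<le> 1}"

text \<open>Algorithm 1. State after k steps: (x^k, x^(k-1), m^(k-1)).
  Indices t range over {1..q}; parameters gam k t, th k t; the k-th step uses index k-1,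
  with (gamma_{-1,t}, theta_{-1,t}) = (1, 1/q).\<close>
definition gprev :: "(nat \<Rightarrow> nat \<Rightarrow> real) \<Rightarrow> nat \<Rightarrow> nat \<Rightarrow> real" where
  "gprev gam k t = (if k = 0 then 1 else gam (k - 1) t)"

definition tprev :: "nat \<Rightarrow> (nat \<Rightarrow> nat \<Rightarrow> real) \<Rightarrow> nat \<Rightarrow> nat \<Rightarrow> real" where
  "tprev q th k t = (if k = 0 then 1 / real q else th (k - 1) t)"

definition mom_step ::
  "('a::euclidean_space \<Rightarrow> 'c \<Rightarrow> 'a) \<Rightarrow> nat \<Rightarrow> (nat \<Rightarrow> nat \<Rightarrow> real) \<Rightarrow> (nat \<Rightarrow> nat \<Rightarrow> real)
    \<Rightarrow> nat \<Rightarrow> 'c \<Rightarrow> 'a \<Rightarrow> 'a \<Rightarrow> 'a \<Rightarrow> 'a" where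
  "mom_step G q gam th k \<xi> x xp mp =
     (1 - (\<Sum>t\<in>{1..q}. tprev q th k t)) *\<^sub>R mp
     + (\<Sum>t\<in>{1..q}. tprev q th k t *\<^sub>R
          G (x + ((1 - gprev gam k t) / gprev gam k t) *\<^sub>R (x - xp)) \<xi>)"

primrec alg_state ::
  "('a::euclidean_space \<Rightarrow> 'c \<Rightarrow> 'a) \<Rightarrow> 'a \<Rightarrow> (nat \<Rightarrow> real) \<Rightarrow> nat \<Rightarrow> (nat \<Rightarrow> nat \<Rightarrow> real)
    \<Rightarrow> (nat \<Rightarrow> nat \<Rightarrow> real) \<Rightarrow> (nat \<Rightarrow> 'c) \<Rightarrow> nat \<Rightarrow> 'a \<times> 'a \<times> 'a" where
  "alg_state G x0 \<eta> q gam th s 0 = (x0, x0, 0)"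
| "alg_state G x0 \<eta> q gam th s (Suc k) =
     (case alg_state G x0 \<eta> q gam th s k of (x, xp, mp) \<Rightarrow>
        let m = mom_step G q gam th k (s k) x xp mp
        in (x - (\<eta> k / norm m) *\<^sub>R m, x, m))"

text \<open>x^k along the sample path s (s k = xi^k).\<close>
definition xseq where
  "xseq G x0 \<eta> q gam th s k = fst (alg_state G x0 \<eta> q gam th s k)"

definition mseq where
  "mseq G x0 \<eta> q gam th s k =
     (case alg_state G x0 \<eta> q gam th s k of (x, xp, mp) \<Rightarrow> mom_step G q gam th k (s k) x xp mp)"

end

theory Submission
  imports Defs
begin

text \<open>Write \<open>e\<^sub>k = m\<^sup>k - \<nabla>f(x\<^sup>k)\<close> and \<open>\<Theta> = \<Sum>\<^sub>t \<theta>\<^sub>k\<^sub>,\<^sub>t\<close>. Along the normalized step,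
  \<open>L\<^sub>1\<close>-smoothness gives \<open>f(x\<^sup>k\<^sup>+\<^sup>1) \<le> f(x\<^sup>k) - \<eta>\<^sub>k \<parallel>\<nabla>f(x\<^sup>k)\<parallel> + 2 \<eta>\<^sub>k \<parallel>e\<^sub>k\<parallel> + L\<^sub>1 \<eta>\<^sub>k\<^sup>2 / 2\<close>.
  The moment conditions make the extrapolation weights annihilate every polynomial of degree
  below \<open>p\<close>, so Taylor expansion of \<open>\<nabla>f\<close> along the step shows that \<open>m\<^sup>k\<^sup>+\<^sup>1 - \<nabla>f(x\<^sup>k\<^sup>+\<^sup>1)\<close> is
  \<open>(1 - \<Theta>) e\<^sub>k\<close> plus a deterministic remainder of size \<open>O(L\<^sub>p \<eta>\<^sub>k\<^sup>p / p!)\<close> plus centred noise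
  of variance at most \<open>(p - 1) \<sigma>\<^sup>2 \<Sum>\<^sub>t \<theta>\<^sub>k\<^sub>,\<^sub>t\<^sup>2\<close>. The cross term \<open>2 \<eta>\<^sub>k \<parallel>e\<^sub>k\<parallel>\<close> is split
  by Young's inequality and absorbed by the decay condition on \<open>p\<^sub>k\<close>.\<close>

section \<open>Iterated derivatives\<close>

lemma hderiv_cong:
  "(\<And>i. i < k \<Longrightarrow> h i = h' i) \<Longrightarrow> hderiv k f x h = hderiv k f x h'"
proof (induction k arbitrary: x)
  case 0 then show ?case by simp
next
  case (Suc k)
  have "(\<lambda>y. hderiv k f y h) = (\<lambda>y. hderiv k f y h')"
    using Suc by auto
  then show ?case using Suc.prems by simp
qed

lemma Cp_hderiv_differentiable: "Cp p f \<Longrightarrow> k < p \<Longrightarrow> (\<lambda>y. hderiv k f y h) differentiable (at x)"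
  unfolding Cp_def by blast

lemma hderiv_fun_upd_lincomb:
  assumes cp: "Cp p f"
  shows "k \<le> p \<Longrightarrow> i < k \<Longrightarrow>
    hderiv k f x (h(i := a *\<^sub>R v + b *\<^sub>R w)) = a * hderiv k f x (h(i := v)) + b * hderiv k f x (h(i := w))"
proof (induction k arbitrary: x i)
  case 0 then show ?case by simp
next
  case (Suc k)
  have kp: "k < p" using Suc by simp
  show ?case
  proof (cases "i = k")
    case True
    have loc: "\<And>u. (\<lambda>y. hderiv k f y (h(k := u))) = (\<lambda>y. hderiv k f y h)"
      by (rule ext, rule hderiv_cong) simp
    have lin: "linear (frechet_derivative (\<lambda>y. hderiv k f y h) (at x))"
      by (rule linear_frechet_derivative[OF Cp_hderiv_differentiable[OF cp kp]])
    show ?thesis using True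
      by (simp only: hderiv.simps fun_upd_same loc linear_add[OF lin] linear_scale[OF lin]) simp
  next
    case False
    then have ik: "i < k" using Suc by simp
    let ?F = "\<lambda>u y. hderiv k f y (h(i := u))"
    have eq: "?F (a *\<^sub>R v + b *\<^sub>R w) = (\<lambda>y. a * ?F v y + b * ?F w y)"
      using Suc.IH[OF _ ik] Suc.prems by (simp add: fun_eq_iff del: fun_upd_apply)
    have d1: "(?F v has_derivative frechet_derivative (?F v) (at x)) (at x)"
      using Cp_hderiv_differentiable[OF cp kp] frechet_derivative_works by blast
    have d2: "(?F w has_derivative frechet_derivative (?F w) (at x)) (at x)"
      using Cp_hderiv_differentiable[OF cp kp] frechet_derivative_works by blast
    have "((\<lambda>y. a * ?F v y + b * ?F w y) has_derivative
        (\<lambda>z. a * frechet_derivative (?F v) (at x) z + b * frechet_derivative (?F w) (at x) z)) (at x)"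
      by (intro has_derivative_add has_derivative_mult_right d1 d2)
    then have "frechet_derivative (\<lambda>y. a * ?F v y + b * ?F w y) (at x) =
        (\<lambda>z. a * frechet_derivative (?F v) (at x) z + b * frechet_derivative (?F w) (at x) z)"
      by (rule frechet_derivative_at[symmetric])
    then show ?thesis using False eq by (simp del: fun_upd_apply) simp
  qed
qed

lemma linear_hderiv_fun_upd:
  assumes cp: "Cp p f" and "k \<le> p" "i < k"
  shows "linear (\<lambda>v. hderiv k f x (h(i := v)))"
proof (rule linearI)
  fix b1 b2 show "hderiv k f x (h(i := b1 + b2)) = hderiv k f x (h(i := b1)) + hderiv k f x (h(i := b2))"
    using hderiv_fun_upd_lincomb[OF cp assms(2,3), of x h 1 b1 1 b2] by simp
next
  fix r b show "hderiv k f x (h(i := r *\<^sub>R b)) = r *\<^sub>R hderiv k f x (h(i := b))"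
    using hderiv_fun_upd_lincomb[OF cp assms(2,3), of x h r b 0 0] by simp
qed

lemma abs_linear_le_sum_Basis:
  fixes l :: "'a::euclidean_space \<Rightarrow> real"
  assumes "linear l" "norm v \<le> 1"
  shows "\<bar>l v\<bar> \<le> (\<Sum>b\<in>Basis. \<bar>l b\<bar>)"
proof -
  have "l v = l (\<Sum>b\<in>Basis. (v \<bullet> b) *\<^sub>R b)" by (simp add: euclidean_representation)
  also have "\<dots> = (\<Sum>b\<in>Basis. (v \<bullet> b) * l b)"
    using assms(1) by (simp add: linear_sum linear_scale)
  finally have "\<bar>l v\<bar> \<le> (\<Sum>b\<in>Basis. \<bar>(v \<bullet> b) * l b\<bar>)"
    by (simp add: sum_abs)
  also have "\<dots> \<le> (\<Sum>b\<in>Basis. \<bar>l b\<bar>)"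
  proof (rule sum_mono)
    fix b :: 'a assume b: "b \<in> Basis"
    have "\<bar>v \<bullet> b\<bar> \<le> 1" using Basis_le_norm[OF b, of v] assms(2) by simp
    then show "\<bar>(v \<bullet> b) * l b\<bar> \<le> \<bar>l b\<bar>"
      by (simp add: abs_mult mult_left_le_one_le)
  qed
  finally show ?thesis .
qed

text \<open>Frees one slot at a time from the basis to the unit ball; with all slots on the
  basis the bound is a finite maximum.\<close>
lemma hderiv_bounded_on_partial_basis:
  assumes cp: "Cp p f" and kp: "k \<le> p" and "n \<le> k"
  shows "\<exists>B. \<forall>h. (\<forall>i<n. norm (h i) \<le> 1) \<and> (\<forall>i. n \<le> i \<and> i < k \<longrightarrow> h i \<in> Basis)
      \<longrightarrow> \<bar>hderiv k f x h\<bar> \<le> B"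
  using \<open>n \<le> k\<close>
proof (induction n)
  case 0
  let ?S = "PiE {..<k} (\<lambda>_. Basis :: 'a set)"
  show ?case
  proof (intro exI allI impI)
    fix h :: "nat \<Rightarrow> 'a"
    assume "(\<forall>i<0. norm (h i) \<le> 1) \<and> (\<forall>i. 0 \<le> i \<and> i < k \<longrightarrow> h i \<in> Basis)"
    then have g: "restrict h {..<k} \<in> ?S" by auto
    have "hderiv k f x h = hderiv k f x (restrict h {..<k})"
      by (rule hderiv_cong) simp
    then show "\<bar>hderiv k f x h\<bar> \<le> (\<Sum>g\<in>?S. \<bar>hderiv k f x g\<bar>)"
      using member_le_sum[OF g, of "\<lambda>g. \<bar>hderiv k f x g\<bar>"] by (simp add: finite_PiE)
  qed
next
  case (Suc n)
  then obtain B where B: "\<And>h. (\<forall>i<n. norm (h i) \<le> 1) \<and> (\<forall>i. n \<le> i \<and> i < k \<longrightarrow> h i \<in> Basis)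
    \<Longrightarrow> \<bar>hderiv k f x h\<bar> \<le> B" by auto
  have nk: "n < k" using Suc by simp
  show ?case
  proof (intro exI allI impI)
    fix h :: "nat \<Rightarrow> 'a"
    assume h: "(\<forall>i<Suc n. norm (h i) \<le> 1) \<and> (\<forall>i. Suc n \<le> i \<and> i < k \<longrightarrow> h i \<in> Basis)"
    have "linear (\<lambda>v. hderiv k f x (h(n := v)))"
      by (rule linear_hderiv_fun_upd[OF cp kp nk])
    from abs_linear_le_sum_Basis[OF this, of "h n"]
    have "\<bar>hderiv k f x (h(n := h n))\<bar> \<le> (\<Sum>b\<in>Basis. \<bar>hderiv k f x (h(n := b))\<bar>)"
      using h by simp
    also have "\<dots> \<le> (\<Sum>b\<in>(Basis::'a set). B)"
    proof (rule sum_mono)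
      fix b :: 'a assume "b \<in> Basis"
      then show "\<bar>hderiv k f x (h(n := b))\<bar> \<le> B"
        using h by (intro B) (auto simp: less_Suc_eq Suc_le_eq)
    qed
    finally show "\<bar>hderiv k f x h\<bar> \<le> real DIM('a) * B" by simp
  qed
qed

lemma hderiv_bounded_on_unit_ball:
  assumes "Cp p f" and "k \<le> p"
  shows "\<exists>B. \<forall>h. (\<forall>i<k. norm (h i) \<le> 1) \<longrightarrow> \<bar>hderiv k f x h\<bar> \<le> B"
  using hderiv_bounded_on_partial_basis[OF assms order_refl, of x] by (meson leD)

lemma hderiv_diff_le_pnorm:
  assumes cp: "Cp p f" and h: "\<forall>i<p. norm (h i) \<le> 1"
  shows "hderiv p f y h - hderiv p f x h \<le> pnorm p (\<lambda>h. hderiv p f y h - hderiv p f x h)"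
proof -
  obtain B1 where B1: "\<forall>h. (\<forall>i<p. norm (h i) \<le> 1) \<longrightarrow> \<bar>hderiv p f y h\<bar> \<le> B1"
    using hderiv_bounded_on_unit_ball[OF cp order_refl] by blast
  obtain B2 where B2: "\<forall>h. (\<forall>i<p. norm (h i) \<le> 1) \<longrightarrow> \<bar>hderiv p f x h\<bar> \<le> B2"
    using hderiv_bounded_on_unit_ball[OF cp order_refl] by blast
  have bdd: "bdd_above {hderiv p f y h - hderiv p f x h | h. \<forall>i<p. norm (h i) \<le> 1}"
  proof (rule bdd_aboveI)
    fix z assume "z \<in> {hderiv p f y h - hderiv p f x h | h. \<forall>i<p. norm (h i) \<le> 1}"
    then obtain g where "z = hderiv p f y g - hderiv p f x g" "\<forall>i<p. norm (g i) \<le> 1" by auto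
    then show "z \<le> B1 + B2" using B1 B2 by fastforce
  qed
  show ?thesis unfolding pnorm_def
    by (rule cSup_upper[OF _ bdd]) (use h in auto)
qed

lemma hderiv_has_real_derivative_on_line:
  assumes cp: "Cp p f" and kp: "k < p" and hk: "h k = u"
  shows "((\<lambda>t. hderiv k f (y + t *\<^sub>R u) h) has_real_derivative hderiv (Suc k) f (y + t *\<^sub>R u) h) (at t)"
proof -
  let ?F = "\<lambda>z. hderiv k f z h"
  let ?D = "frechet_derivative ?F (at (y + t *\<^sub>R u))"
  have dF: "(?F has_derivative ?D) (at (y + t *\<^sub>R u))"
    using Cp_hderiv_differentiable[OF cp kp] frechet_derivative_works by blast
  have lin: "linear ?D" using Cp_hderiv_differentiable[OF cp kp] by (rule linear_frechet_derivative)
  have dp: "((\<lambda>t. y + t *\<^sub>R u) has_derivative (\<lambda>s. s *\<^sub>R u)) (at t)"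
    by (auto intro!: derivative_eq_intros)
  have "((?F \<circ> (\<lambda>t. y + t *\<^sub>R u)) has_derivative (?D \<circ> (\<lambda>s. s *\<^sub>R u))) (at t)"
    by (rule diff_chain_at[OF dp dF])
  moreover have "(?D \<circ> (\<lambda>s. s *\<^sub>R u)) = (*) (hderiv (Suc k) f (y + t *\<^sub>R u) h)"
    using hk by (simp add: fun_eq_iff linear_scale[OF lin] mult.commute)
  ultimately show ?thesis
    unfolding has_field_derivative_def by (simp add: comp_def)
qed

section \<open>Taylor expansion\<close>

lemma abs_le_if_abs_deriv_le:
  fixes \<psi> W :: "real \<Rightarrow> real"
  assumes d\<psi>: "\<And>t. (\<psi> has_real_derivative \<psi>' t) (at t)"
    and dW: "\<And>t. (W has_real_derivative W' t) (at t)"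
    and le: "\<And>t. 0 \<le> t \<Longrightarrow> t \<le> c \<Longrightarrow> \<bar>\<psi>' t\<bar> \<le> W' t"
    and "0 \<le> c" "\<psi> 0 = 0" "W 0 = 0"
  shows "\<bar>\<psi> c\<bar> \<le> W c"
proof -
  have "(\<lambda>t. W t - \<psi> t) 0 \<le> (\<lambda>t. W t - \<psi> t) c"
  proof (rule DERIV_nonneg_imp_nondecreasing[OF \<open>0 \<le> c\<close>])
    fix t assume "0 \<le> t" "t \<le> c"
    then show "\<exists>y. ((\<lambda>t. W t - \<psi> t) has_real_derivative y) (at t) \<and> 0 \<le> y"
      using DERIV_diff[OF dW d\<psi>] le[of t] by fastforce
  qed
  moreover have "(\<lambda>t. W t + \<psi> t) 0 \<le> (\<lambda>t. W t + \<psi> t) c"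
  proof (rule DERIV_nonneg_imp_nondecreasing[OF \<open>0 \<le> c\<close>])
    fix t assume "0 \<le> t" "t \<le> c"
    then show "\<exists>y. ((\<lambda>t. W t + \<psi> t) has_real_derivative y) (at t) \<and> 0 \<le> y"
      using DERIV_add[OF dW d\<psi>] le[of t] by fastforce
  qed
  ultimately show ?thesis using assms(5,6) by simp
qed

lemma has_real_derivative_taylor_term:
  "((\<lambda>t. a * t ^ Suc i / fact (Suc i)) has_real_derivative a * t ^ i / fact i) (at t)"
proof -
  have "((\<lambda>t. a * t ^ Suc i / fact (Suc i)) has_real_derivative
      a * (real (Suc i) * t ^ i) / fact (Suc i)) (at t)"
    using DERIV_pow[of "Suc i" t] by (intro DERIV_cdivide DERIV_cmult) simp
  then show ?thesis by (simp add: fact_Suc del: of_nat_Suc)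
qed

text \<open>Induction on the order: the bound for the shifted chain \<open>g (Suc j)\<close> is integrated
  once more at each step.\<close>
lemma taylor_remainder_le_nonneg:
  fixes g :: "nat \<Rightarrow> real \<Rightarrow> real"
  assumes "\<And>j t. j < n \<Longrightarrow> (g j has_real_derivative g (Suc j) t) (at t)"
    and "\<And>t. t \<ge> 0 \<Longrightarrow> \<bar>g n t - g n 0\<bar> \<le> C * t"
    and "c \<ge> 0"
  shows "\<bar>g 0 c - (\<Sum>i\<le>n. g i 0 * c ^ i / fact i)\<bar> \<le> C * c ^ Suc n / fact (Suc n)"
  using assms
proof (induction n arbitrary: g c)
  case 0
  then show ?case by simp
next
  case (Suc n)
  define Q where "Q t = (\<Sum>i\<le>n. g (Suc i) 0 * t ^ Suc i / fact (Suc i))" for t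
  define Q' where "Q' t = (\<Sum>i\<le>n. g (Suc i) 0 * t ^ i / fact i)" for t
  have IH: "\<bar>g 1 t - Q' t\<bar> \<le> C * t ^ Suc n / fact (Suc n)" if "t \<ge> 0" for t
    using Suc.IH[of "\<lambda>j. g (Suc j)" t] Suc.prems that by (simp add: Q'_def)
  have dQ: "(Q has_real_derivative Q' t) (at t)" for t
    unfolding Q_def Q'_def by (intro DERIV_sum has_real_derivative_taylor_term)
  have "\<bar>(\<lambda>t. g 0 t - g 0 0 - Q t) c\<bar> \<le> (\<lambda>t. C * t ^ Suc (Suc n) / fact (Suc (Suc n))) c"
  proof (rule abs_le_if_abs_deriv_le[where \<psi>="\<lambda>t. g 0 t - g 0 0 - Q t"
        and W="\<lambda>t. C * t ^ Suc (Suc n) / fact (Suc (Suc n))"])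
    show "((\<lambda>t. g 0 t - g 0 0 - Q t) has_real_derivative g 1 t - Q' t) (at t)" for t
      using Suc.prems(1)[of 0 t] dQ[of t] by (auto intro!: derivative_eq_intros)
    show "((\<lambda>t. C * t ^ Suc (Suc n) / fact (Suc (Suc n))) has_real_derivative
        C * t ^ Suc n / fact (Suc n)) (at t)" for t
      by (rule has_real_derivative_taylor_term)
  qed (use IH Suc.prems(3) in \<open>auto simp: Q_def\<close>)
  moreover have "(\<Sum>i\<le>Suc n. g i 0 * c ^ i / fact i) = g 0 0 + Q c"
    unfolding Q_def by (subst sum.atMost_Suc_shift) simp
  ultimately show ?case by simp
qed

lemma taylor_remainder_le:
  fixes g :: "nat \<Rightarrow> real \<Rightarrow> real"
  assumes d: "\<And>j t. j < n \<Longrightarrow> (g j has_real_derivative g (Suc j) t) (at t)"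
    and b: "\<And>t. \<bar>g n t - g n 0\<bar> \<le> C * \<bar>t\<bar>"
  shows "\<bar>g 0 c - (\<Sum>i\<le>n. g i 0 * c ^ i / fact i)\<bar> \<le> C * \<bar>c\<bar> ^ Suc n / fact (Suc n)"
proof (cases "c \<ge> 0")
  case True
  have bb: "\<And>t. t \<ge> 0 \<Longrightarrow> \<bar>g n t - g n 0\<bar> \<le> C * t" using b by (metis abs_of_nonneg)
  show ?thesis using taylor_remainder_le_nonneg[OF d bb True] True by simp
next
  case False
  define g' where "g' j t = (-1) ^ j * g j (- t)" for j t
  have d': "(g' j has_real_derivative g' (Suc j) t) (at t)" if "j < n" for j t
  proof -
    have "((\<lambda>t. g j (- t)) has_real_derivative g (Suc j) (- t) * (- 1)) (at t)"
      using DERIV_chain2[OF d[OF that] DERIV_minus[OF DERIV_ident]] by simp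
    then show ?thesis unfolding g'_def
      by (auto intro!: derivative_eq_intros)
  qed
  have b': "\<bar>g' n t - g' n 0\<bar> \<le> C * t" if "t \<ge> 0" for t
  proof -
    have "\<bar>g' n t - g' n 0\<bar> = \<bar>g n (- t) - g n 0\<bar>"
      unfolding g'_def by (simp add: right_diff_distrib[symmetric] abs_mult)
    then show ?thesis using b[of "- t"] that by simp
  qed
  have "\<bar>g' 0 (- c) - (\<Sum>i\<le>n. g' i 0 * (- c) ^ i / fact i)\<bar> \<le> C * (- c) ^ Suc n / fact (Suc n)"
    using taylor_remainder_le_nonneg[of n g' C "- c"] d' b' False by simp
  moreover have "g' i 0 * (- c) ^ i = g i 0 * c ^ i" for i
  proof -
    have "(-1::real) ^ i * (- c) ^ i = c ^ i" by (simp flip: power_mult_distrib)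
    then show ?thesis by (simp add: g'_def mult.left_commute)
  qed
  moreover have "g' 0 (- c) = g 0 c" by (simp add: g'_def)
  moreover have "\<bar>c\<bar> = - c" using False by simp
  ultimately show ?thesis by simp
qed

lemma gradient_taylor_on_line:
  fixes f :: "'a::euclidean_space \<Rightarrow> real"
  assumes cp: "Cp p f" and p2: "p \<ge> 2"
    and grad: "\<And>x. (f has_derivative (\<lambda>h. gradf x \<bullet> h)) (at x)"
    and Lip: "\<And>x y. pnorm p (\<lambda>h. hderiv p f y h - hderiv p f x h) \<le> Lp * norm (y - x)"
    and u: "norm u = 1" and w: "norm w \<le> 1"
  shows "\<bar>gradf (y + c *\<^sub>R u) \<bullet> w - (\<Sum>i\<le>p-1. hderiv (Suc i) f y (\<lambda>i. if i = 0 then w else u) * c ^ i / fact i)\<bar>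
     \<le> Lp * \<bar>c\<bar> ^ p / fact p"
proof -
  define hw where "hw = (\<lambda>i::nat. if i = 0 then w else u)"
  define g where "g j t = hderiv (Suc j) f (y + t *\<^sub>R u) hw" for j t
  have hw1: "\<forall>i<p. norm (hw i) \<le> 1" using u w by (simp add: hw_def)
  have d: "(g j has_real_derivative g (Suc j) t) (at t)" if "j < p - 1" for j t
    unfolding g_def by (rule hderiv_has_real_derivative_on_line[OF cp]) (use that in \<open>auto simp: hw_def\<close>)
  have b: "\<bar>g (p-1) t - g (p-1) 0\<bar> \<le> Lp * \<bar>t\<bar>" for t
  proof -
    have sp: "Suc (p - 1) = p" using p2 by simp
    have n: "norm (y + t *\<^sub>R u - y) = \<bar>t\<bar>" using u by simp
    have "hderiv p f (y + t *\<^sub>R u) hw - hderiv p f y hw \<le> Lp * \<bar>t\<bar>"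
      using hderiv_diff_le_pnorm[OF cp hw1, of "y + t *\<^sub>R u" y] Lip[of "y + t *\<^sub>R u" y] n u by simp
    moreover have "hderiv p f y hw - hderiv p f (y + t *\<^sub>R u) hw \<le> Lp * \<bar>t\<bar>"
      using hderiv_diff_le_pnorm[OF cp hw1, of y "y + t *\<^sub>R u"] Lip[of y "y + t *\<^sub>R u"] n u
      by (simp add: norm_minus_commute)
    ultimately show ?thesis unfolding g_def sp by simp
  qed
  have g0: "g 0 t = gradf (y + t *\<^sub>R u) \<bullet> w" for t
  proof -
    have "(\<lambda>h. gradf (y + t *\<^sub>R u) \<bullet> h) = frechet_derivative f (at (y + t *\<^sub>R u))"
      by (rule frechet_derivative_at[OF grad])
    then show ?thesis unfolding g_def hw_def by (simp add: fun_eq_iff)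
  qed
  have "\<bar>g 0 c - (\<Sum>i\<le>p-1. g i 0 * c ^ i / fact i)\<bar> \<le> Lp * \<bar>c\<bar> ^ Suc (p-1) / fact (Suc (p-1))"
    by (rule taylor_remainder_le[OF d b])
  moreover have "Suc (p - 1) = p" using p2 by simp
  ultimately show ?thesis unfolding g0 by (simp add: g_def hw_def)
qed

section \<open>Extrapolation\<close>

lemma norm_le_if_inner_le:
  fixes v :: "'a::real_inner"
  assumes "\<And>w. norm w \<le> 1 \<Longrightarrow> v \<bullet> w \<le> B"
  shows "norm v \<le> B"
proof (cases "v = 0")
  case False
  have "v \<bullet> (v /\<^sub>R norm v) = norm v"
    using False by (simp add: power2_norm_eq_inner[symmetric] power2_eq_square)
  then show ?thesis using assms(1)[of "v /\<^sub>R norm v"] False by simp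
qed (use assms[of 0] in simp)

text \<open>Expanding \<open>((1 - \<gamma>)/\<gamma>)\<^sup>i = (1/\<gamma> - 1)\<^sup>i\<close> binomially, the moment conditions
  leave only the alternating sum of binomial coefficients.\<close>
lemma extrapolation_moment_cancel:
  fixes \<theta> \<gamma> :: "nat \<Rightarrow> real" and S :: "nat set"
  assumes fin: "finite S" and gpos: "\<And>t. t \<in> S \<Longrightarrow> \<gamma> t \<noteq> 0"
    and mom: "\<And>j. 1 \<le> j \<Longrightarrow> j \<le> i \<Longrightarrow> (\<Sum>t\<in>S. \<theta> t / \<gamma> t ^ j) = 1" and i: "1 \<le> i"
  shows "(1 - sum \<theta> S) * (-1) ^ i + (\<Sum>t\<in>S. \<theta> t * ((1 - \<gamma> t) / \<gamma> t) ^ i) = 0"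
proof -
  have "(\<Sum>t\<in>S. \<theta> t * ((1 - \<gamma> t) / \<gamma> t) ^ i)
      = (\<Sum>t\<in>S. \<Sum>j\<le>i. \<theta> t * (of_nat (i choose j) * (1 / \<gamma> t) ^ j * (-1) ^ (i - j)))"
  proof (rule sum.cong)
    fix t assume t: "t \<in> S"
    have "(1 - \<gamma> t) / \<gamma> t = 1 / \<gamma> t + (-1)" using gpos[OF t] by (simp add: field_simps)
    then show "\<theta> t * ((1 - \<gamma> t) / \<gamma> t) ^ i = (\<Sum>j\<le>i. \<theta> t * (of_nat (i choose j) * (1 / \<gamma> t) ^ j * (-1) ^ (i - j)))"
      by (simp only: binomial_ring sum_distrib_left)
  qed simp
  also have "\<dots> = (\<Sum>j\<le>i. of_nat (i choose j) * (-1) ^ (i - j) * (\<Sum>t\<in>S. \<theta> t / \<gamma> t ^ j))"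
    by (subst sum.swap) (simp add: sum_distrib_left mult_ac power_one_over)
  also have "\<dots> = (\<Sum>j\<le>i. of_nat (i choose j) * (-1) ^ (i - j) * (1 + (if j = 0 then sum \<theta> S - 1 else 0)))"
    using mom by (intro sum.cong) auto
  also have "\<dots> = (\<Sum>j\<le>i. of_nat (i choose j) * (-1) ^ (i - j)) +
        (\<Sum>j\<le>i. of_nat (i choose j) * (-1) ^ (i - j) * (if j = 0 then sum \<theta> S - 1 else 0))"
    by (simp only: distrib_left mult_1_right sum.distrib)
  also have "(\<Sum>j\<le>i. of_nat (i choose j) * (-1::real) ^ (i - j)) = 0"
  proof -
    have "(1 + (-1::real)) ^ i = (\<Sum>j\<le>i. of_nat (i choose j) * 1 ^ j * (-1) ^ (i - j))"
      by (rule binomial_ring)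
    moreover have "(0::real) ^ i = 0" using i by simp
    ultimately show ?thesis by simp
  qed
  also have "(\<Sum>j\<le>i. of_nat (i choose j) * (-1::real) ^ (i - j) * (if j = 0 then sum \<theta> S - 1 else 0))
      = (-1) ^ i * (sum \<theta> S - 1)"
  proof -
    have "(\<lambda>j. of_nat (i choose j) * (-1::real) ^ (i - j) * (if j = 0 then sum \<theta> S - 1 else 0))
        = (\<lambda>j. if j = 0 then (-1) ^ i * (sum \<theta> S - 1) else 0)" by auto
    then show ?thesis by (simp only: sum.delta finite_atMost) simp
  qed
  finally show ?thesis by (simp add: algebra_simps)
qed

lemma extrapolation_cancels_polynomial:
  fixes a \<theta> \<gamma> :: "nat \<Rightarrow> real" and S :: "nat set"
  assumes fin: "finite S" and gnz: "\<And>t. t \<in> S \<Longrightarrow> \<gamma> t \<noteq> 0"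
    and mom: "\<And>j. 1 \<le> j \<Longrightarrow> j \<le> q \<Longrightarrow> (\<Sum>t\<in>S. \<theta> t / \<gamma> t ^ j) = 1"
  shows "(1 - sum \<theta> S) * ((\<Sum>i\<le>q. a i * (- \<eta>) ^ i) - a 0)
      + (\<Sum>t\<in>S. \<theta> t * ((\<Sum>i\<le>q. a i * ((1 - \<gamma> t) / \<gamma> t * \<eta>) ^ i) - a 0)) = 0"
proof -
  define c where "c t = (1 - \<gamma> t) / \<gamma> t" for t
  have shift: "(\<Sum>i\<le>q. a i * x ^ i) - a 0 = (\<Sum>i\<in>{1..q}. a i * x ^ i)" for x
    by (simp add: atMost_atLeast0 sum.atLeast_Suc_atMost)
  have coefficient: "(1 - sum \<theta> S) * (a i * (- \<eta>) ^ i) + (\<Sum>t\<in>S. \<theta> t * (a i * (c t * \<eta>) ^ i))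
      = a i * \<eta> ^ i * ((1 - sum \<theta> S) * (-1) ^ i + (\<Sum>t\<in>S. \<theta> t * c t ^ i))" for i
  proof -
    have "(- \<eta>) ^ i = (-1) ^ i * \<eta> ^ i" by (simp flip: power_mult_distrib)
    then show ?thesis
      by (simp add: power_mult_distrib sum_distrib_left algebra_simps)
  qed
  have "(1 - sum \<theta> S) * (\<Sum>i\<in>{1..q}. a i * (- \<eta>) ^ i)
      + (\<Sum>t\<in>S. \<theta> t * (\<Sum>i\<in>{1..q}. a i * (c t * \<eta>) ^ i))
      = (\<Sum>i\<in>{1..q}. a i * \<eta> ^ i * ((1 - sum \<theta> S) * (-1) ^ i + (\<Sum>t\<in>S. \<theta> t * c t ^ i)))"
    unfolding coefficient[symmetric] sum_distrib_left sum.distrib by (subst sum.swap) (rule refl)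
  also have "\<dots> = 0"
    using extrapolation_moment_cancel[OF fin gnz mom] by (simp add: c_def)
  finally show ?thesis by (simp only: shift c_def)
qed

text \<open>Tested against a unit vector \<open>w\<close>, the gradient along the line \<open>y + s u\<close> agrees with a
  polynomial of degree \<open>p - 1\<close> in \<open>s\<close> up to \<open>O(\<bar>s\<bar>\<^sup>p)\<close>, and the polynomial part cancels.\<close>
lemma extrapolated_gradient_error_le:
  fixes f :: "'a::euclidean_space \<Rightarrow> real"
  assumes cp: "Cp p f" and p2: "p \<ge> 2"
    and grad: "\<And>x. (f has_derivative (\<lambda>h. gradf x \<bullet> h)) (at x)"
    and Lip: "\<And>x y. pnorm p (\<lambda>h. hderiv p f y h - hderiv p f x h) \<le> Lp * norm (y - x)"
    and u: "norm u = 1" and eta: "\<eta> > 0"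
    and gam: "\<And>t. t \<in> {1..p-1} \<Longrightarrow> 0 < \<gamma> t \<and> \<gamma> t < 1"
    and mom: "\<And>i. i \<in> {1..p-1} \<Longrightarrow> (\<Sum>t\<in>{1..p-1}. \<theta> t / \<gamma> t ^ i) = 1"
    and Th: "sum \<theta> {1..p-1} \<le> 1"
  shows "norm ((1 - sum \<theta> {1..p-1}) *\<^sub>R (gradf (y + (- \<eta>) *\<^sub>R u) - gradf y)
      + (\<Sum>t\<in>{1..p-1}. \<theta> t *\<^sub>R (gradf (y + ((1 - \<gamma> t) / \<gamma> t * \<eta>) *\<^sub>R u) - gradf y)))
     \<le> Lp * \<eta> ^ p / fact p * ((1 - sum \<theta> {1..p-1}) + (\<Sum>t\<in>{1..p-1}. \<bar>\<theta> t\<bar> * ((1 - \<gamma> t) / \<gamma> t) ^ p))"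
    (is "norm ?R \<le> ?B")
proof (rule norm_le_if_inner_le)
  define S where "S = {1..p-1}"
  define \<Theta> where "\<Theta> = sum \<theta> S"
  define c where "c t = (1 - \<gamma> t) / \<gamma> t" for t
  have cpos: "c t \<ge> 0" if "t \<in> S" for t using gam[of t] that by (simp add: c_def S_def)
  fix w :: 'a assume w: "norm w \<le> 1"
  define a where "a i = hderiv (Suc i) f y (\<lambda>i. if i = 0 then w else u) / fact i" for i
  define T where "T x = gradf (y + x *\<^sub>R u) \<bullet> w" for x
  define E where "E x = T x - (\<Sum>i\<le>p-1. a i * x ^ i)" for x
  have Eb: "\<bar>E x\<bar> \<le> Lp * \<bar>x\<bar> ^ p / fact p" for x
    using gradient_taylor_on_line[OF cp p2 grad Lip u w, of y x]
    by (simp add: E_def T_def a_def mult.commute mult.left_commute)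
  have "\<bar>E 0\<bar> \<le> 0" using Eb[of 0] p2 by (simp add: power_0_left)
  then have T0: "T 0 = a 0" by (simp add: E_def atMost_atLeast0 sum.atLeast_Suc_atMost)
  have "?R \<bullet> w = (1 - \<Theta>) * (T (- \<eta>) - T 0) + (\<Sum>t\<in>S. \<theta> t * (T (c t * \<eta>) - T 0))"
    unfolding T_def \<Theta>_def S_def c_def
    by (simp add: inner_add_left inner_diff_left inner_sum_left)
  also have "\<dots> = (1 - \<Theta>) * E (- \<eta>) + (\<Sum>t\<in>S. \<theta> t * E (c t * \<eta>))"
  proof -
    have "(1 - \<Theta>) * ((\<Sum>i\<le>p-1. a i * (- \<eta>) ^ i) - a 0)
        + (\<Sum>t\<in>S. \<theta> t * ((\<Sum>i\<le>p-1. a i * (c t * \<eta>) ^ i) - a 0)) = 0"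
      unfolding \<Theta>_def c_def
      by (rule extrapolation_cancels_polynomial) (use gam mom in \<open>force simp: S_def\<close>)+
    then show ?thesis
      by (simp add: T0 E_def algebra_simps sum.distrib sum_subtractf)
  qed
  also have "\<dots> \<le> (1 - \<Theta>) * (Lp * \<eta> ^ p / fact p) + (\<Sum>t\<in>S. \<bar>\<theta> t\<bar> * (Lp * (c t * \<eta>) ^ p / fact p))"
  proof (rule add_mono)
    have "1 - \<Theta> \<ge> 0" using Th by (simp add: \<Theta>_def S_def)
    then show "(1 - \<Theta>) * E (- \<eta>) \<le> (1 - \<Theta>) * (Lp * \<eta> ^ p / fact p)"
      using Eb[of "- \<eta>"] eta by (intro mult_left_mono) auto
    show "(\<Sum>t\<in>S. \<theta> t * E (c t * \<eta>)) \<le> (\<Sum>t\<in>S. \<bar>\<theta> t\<bar> * (Lp * (c t * \<eta>) ^ p / fact p))"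
    proof (rule sum_mono)
      fix t assume t: "t \<in> S"
      have "\<theta> t * E (c t * \<eta>) \<le> \<bar>\<theta> t\<bar> * \<bar>E (c t * \<eta>)\<bar>" by (simp add: abs_mult[symmetric])
      also have "\<dots> \<le> \<bar>\<theta> t\<bar> * (Lp * (c t * \<eta>) ^ p / fact p)"
        using Eb[of "c t * \<eta>"] cpos[OF t] eta by (intro mult_left_mono) auto
      finally show "\<theta> t * E (c t * \<eta>) \<le> \<bar>\<theta> t\<bar> * (Lp * (c t * \<eta>) ^ p / fact p)" .
    qed
  qed
  also have "\<dots> = ?B"
  proof -
    have "(\<Sum>t\<in>S. \<bar>\<theta> t\<bar> * (Lp * (c t * \<eta>) ^ p / fact p))
        = Lp * \<eta> ^ p / fact p * (\<Sum>t\<in>S. \<bar>\<theta> t\<bar> * c t ^ p)"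
      by (simp add: sum_distrib_left power_mult_distrib mult_ac)
    then show ?thesis
      unfolding \<Theta>_def S_def c_def by (simp add: algebra_simps add_divide_distrib[symmetric])
  qed
  finally show "?R \<bullet> w \<le> ?B" .
qed

lemma sq_extrapolation_weight_le:
  fixes \<theta> \<gamma> :: real
  assumes "0 < \<gamma>" "\<gamma> < 1"
  shows "(\<bar>\<theta>\<bar> * ((1 - \<gamma>) / \<gamma>) ^ p)\<^sup>2 \<le> \<theta>\<^sup>2 / \<gamma> ^ (2 * p)"
proof -
  have "((1 - \<gamma>) / \<gamma>) ^ (2 * p) \<le> (1 / \<gamma>) ^ (2 * p)"
    using assms by (intro power_mono divide_right_mono) auto
  then have "\<theta>\<^sup>2 * ((1 - \<gamma>) / \<gamma>) ^ (2 * p) \<le> \<theta>\<^sup>2 * (1 / \<gamma>) ^ (2 * p)"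
    by (rule mult_left_mono) simp
  then show ?thesis
    by (simp add: power_mult_distrib power_mult[symmetric] power_one_over mult.commute)
qed

lemma extrapolation_weight_sq_le:
  fixes \<theta> \<gamma> :: "nat \<Rightarrow> real"
  assumes p2: "p \<ge> 2" and gam: "\<And>t. t \<in> {1..p-1} \<Longrightarrow> 0 < \<gamma> t \<and> \<gamma> t < 1"
    and Th: "0 \<le> 1 - sum \<theta> {1..p-1}" "1 - sum \<theta> {1..p-1} \<le> 1"
  shows "((1 - sum \<theta> {1..p-1}) + (\<Sum>t\<in>{1..p-1}. \<bar>\<theta> t\<bar> * ((1 - \<gamma> t) / \<gamma> t) ^ p))\<^sup>2
     \<le> real p * (1 + (\<Sum>t\<in>{1..p-1}. (\<theta> t)\<^sup>2 / \<gamma> t ^ (2 * p)))"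
proof -
  define b where "b j = (if j = 0 then 1 - sum \<theta> {1..p-1} else \<bar>\<theta> j\<bar> * ((1 - \<gamma> j) / \<gamma> j) ^ p)" for j
  have split: "(\<Sum>j\<in>{0..p-1}. h j) = h 0 + (\<Sum>j\<in>{1..p-1}. h j)" for h :: "nat \<Rightarrow> real"
    by (subst sum.atLeast_Suc_atMost) auto
  have sb: "(\<Sum>j\<in>{0..p-1}. b j) = (1 - sum \<theta> {1..p-1}) + (\<Sum>t\<in>{1..p-1}. \<bar>\<theta> t\<bar> * ((1 - \<gamma> t) / \<gamma> t) ^ p)"
    unfolding split b_def by simp
  have card: "card {0..p-1} = p" using p2 by simp
  have h1: "(\<Sum>j\<in>{0..p-1}. b j)\<^sup>2 \<le> (\<Sum>j\<in>{0..p-1}. (b j)\<^sup>2) * real (card {0..p-1})"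
    by (rule sum_squared_le_sum_of_squares)
  have h2: "(\<Sum>j\<in>{0..p-1}. (b j)\<^sup>2) \<le> 1 + (\<Sum>t\<in>{1..p-1}. (\<theta> t)\<^sup>2 / \<gamma> t ^ (2 * p))"
  proof -
    have "(\<Sum>j\<in>{0..p-1}. (b j)\<^sup>2) = (1 - sum \<theta> {1..p-1})\<^sup>2 + (\<Sum>t\<in>{1..p-1}. (\<bar>\<theta> t\<bar> * ((1 - \<gamma> t) / \<gamma> t) ^ p)\<^sup>2)"
      unfolding split b_def by simp
    also have "\<dots> \<le> 1 + (\<Sum>t\<in>{1..p-1}. (\<theta> t)\<^sup>2 / \<gamma> t ^ (2 * p))"
      using Th gam by (intro add_mono sum_mono sq_extrapolation_weight_le) (auto simp: power_le_one)
    finally show ?thesis .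
  qed
  have "(\<Sum>j\<in>{0..p-1}. (b j)\<^sup>2) * real p \<le> (1 + (\<Sum>t\<in>{1..p-1}. (\<theta> t)\<^sup>2 / \<gamma> t ^ (2 * p))) * real p"
    using h2 by (rule mult_right_mono) simp
  with h1 show ?thesis unfolding sb card by (simp add: mult.commute)
qed

lemma extrapolated_gradient_error_sq_le:
  fixes f :: "'a::euclidean_space \<Rightarrow> real"
  assumes cp: "Cp p f" and p2: "p \<ge> 2"
    and grad: "\<And>x. (f has_derivative (\<lambda>h. gradf x \<bullet> h)) (at x)"
    and Lip: "\<And>x y. pnorm p (\<lambda>h. hderiv p f y h - hderiv p f x h) \<le> Lp * norm (y - x)"
    and u: "norm u = 1" and eta: "\<eta> > 0"
    and gam: "\<And>t. t \<in> {1..p-1} \<Longrightarrow> 0 < \<gamma> t \<and> \<gamma> t < 1"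
    and mom: "\<And>i. i \<in> {1..p-1} \<Longrightarrow> (\<Sum>t\<in>{1..p-1}. \<theta> t / \<gamma> t ^ i) = 1"
    and Th: "0 \<le> sum \<theta> {1..p-1}" "sum \<theta> {1..p-1} \<le> 1"
  shows "(norm ((1 - sum \<theta> {1..p-1}) *\<^sub>R (gradf (y + (- \<eta>) *\<^sub>R u) - gradf y)
      + (\<Sum>t\<in>{1..p-1}. \<theta> t *\<^sub>R (gradf (y + ((1 - \<gamma> t) / \<gamma> t * \<eta>) *\<^sub>R u) - gradf y))))\<^sup>2
     \<le> real p * Lp\<^sup>2 * \<eta> ^ (2 * p) / (fact p)\<^sup>2 * (1 + (\<Sum>t\<in>{1..p-1}. (\<theta> t)\<^sup>2 / \<gamma> t ^ (2 * p)))"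
    (is "(norm ?R)\<^sup>2 \<le> _")
proof -
  define W where "W = (1 - sum \<theta> {1..p-1}) + (\<Sum>t\<in>{1..p-1}. \<bar>\<theta> t\<bar> * ((1 - \<gamma> t) / \<gamma> t) ^ p)"
  have "norm ?R \<le> Lp * \<eta> ^ p / fact p * W"
    unfolding W_def by (rule extrapolated_gradient_error_le[OF cp p2 grad Lip u eta gam mom Th(2)])
  then have "(norm ?R)\<^sup>2 \<le> (Lp * \<eta> ^ p / fact p * W)\<^sup>2"
    by (intro power_mono) auto
  also have "\<dots> = (Lp * \<eta> ^ p / fact p)\<^sup>2 * W\<^sup>2"
    by (rule power_mult_distrib)
  also have "\<dots> \<le> (Lp * \<eta> ^ p / fact p)\<^sup>2 * (real p * (1 + (\<Sum>t\<in>{1..p-1}. (\<theta> t)\<^sup>2 / \<gamma> t ^ (2 * p))))"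
    unfolding W_def using Th by (intro mult_left_mono extrapolation_weight_sq_le[OF p2 gam]) auto
  also have "\<dots> = real p * Lp\<^sup>2 * \<eta> ^ (2 * p) / (fact p)\<^sup>2 * (1 + (\<Sum>t\<in>{1..p-1}. (\<theta> t)\<^sup>2 / \<gamma> t ^ (2 * p)))"
    by (simp add: power_mult_distrib power_divide power_mult[symmetric] mult_ac)
  finally show ?thesis .
qed

section \<open>The momentum error\<close>

lemma integral_sq_norm_add_centered:
  fixes N :: "'c \<Rightarrow> 'a::euclidean_space"
  assumes P: "prob_space M" and iN: "integrable M N" and eN: "(\<integral>\<xi>. N \<xi> \<partial>M) = 0"
    and iN2: "integrable M (\<lambda>\<xi>. (norm (N \<xi>))\<^sup>2)"
  shows "integrable M (\<lambda>\<xi>. (norm (a + N \<xi>))\<^sup>2)"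
    and "(\<integral>\<xi>. (norm (a + N \<xi>))\<^sup>2 \<partial>M) = (norm a)\<^sup>2 + (\<integral>\<xi>. (norm (N \<xi>))\<^sup>2 \<partial>M)"
proof -
  interpret prob_space M by (rule P)
  have expand: "(\<lambda>\<xi>. (norm (a + N \<xi>))\<^sup>2) = (\<lambda>\<xi>. ((norm a)\<^sup>2 + 2 * (a \<bullet> N \<xi>)) + (norm (N \<xi>))\<^sup>2)"
    by (simp add: power2_norm_eq_inner inner_add_left inner_add_right inner_commute add_ac)
  have i1: "integrable M (\<lambda>\<xi>. (norm a)\<^sup>2 + 2 * (a \<bullet> N \<xi>))"
    using iN by auto
  show "integrable M (\<lambda>\<xi>. (norm (a + N \<xi>))\<^sup>2)"
    unfolding expand using i1 iN2 by (rule Bochner_Integration.integrable_add)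
  show "(\<integral>\<xi>. (norm (a + N \<xi>))\<^sup>2 \<partial>M) = (norm a)\<^sup>2 + (\<integral>\<xi>. (norm (N \<xi>))\<^sup>2 \<partial>M)"
    unfolding expand Bochner_Integration.integral_add[OF i1 iN2]
    using iN eN by (simp add: prob_space)
qed

lemma integral_sq_norm_weighted_sum_le:
  fixes n :: "'i \<Rightarrow> 'c \<Rightarrow> 'a::euclidean_space"
  assumes fin: "finite S" and mn: "\<And>t. n t \<in> borel_measurable M"
    and iV: "\<And>t. integrable M (\<lambda>\<xi>. (norm (n t \<xi>))\<^sup>2)"
    and eV: "\<And>t. (\<integral>\<xi>. (norm (n t \<xi>))\<^sup>2 \<partial>M) \<le> \<sigma>\<^sup>2"
  shows "integrable M (\<lambda>\<xi>. (norm (\<Sum>t\<in>S. \<theta> t *\<^sub>R n t \<xi>))\<^sup>2)"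
    and "(\<integral>\<xi>. (norm (\<Sum>t\<in>S. \<theta> t *\<^sub>R n t \<xi>))\<^sup>2 \<partial>M) \<le> real (card S) * \<sigma>\<^sup>2 * (\<Sum>t\<in>S. (\<theta> t)\<^sup>2)"
proof -
  define B where "B \<xi> = real (card S) * (\<Sum>t\<in>S. (\<theta> t)\<^sup>2 * (norm (n t \<xi>))\<^sup>2)" for \<xi>
  have iB: "integrable M B"
    unfolding B_def using iV by auto
  have pw: "(norm (\<Sum>t\<in>S. \<theta> t *\<^sub>R n t \<xi>))\<^sup>2 \<le> B \<xi>" for \<xi>
  proof -
    have "norm (\<Sum>t\<in>S. \<theta> t *\<^sub>R n t \<xi>) \<le> (\<Sum>t\<in>S. \<bar>\<theta> t\<bar> * norm (n t \<xi>))"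
      using norm_sum[of "\<lambda>t. \<theta> t *\<^sub>R n t \<xi>" S] by simp
    then have "(norm (\<Sum>t\<in>S. \<theta> t *\<^sub>R n t \<xi>))\<^sup>2 \<le> (\<Sum>t\<in>S. \<bar>\<theta> t\<bar> * norm (n t \<xi>))\<^sup>2"
      by (intro power_mono) auto
    also have "\<dots> \<le> (\<Sum>t\<in>S. (\<bar>\<theta> t\<bar> * norm (n t \<xi>))\<^sup>2) * real (card S)"
      by (rule sum_squared_le_sum_of_squares)
    finally show ?thesis unfolding B_def by (simp add: power_mult_distrib mult.commute)
  qed
  have mN: "(\<lambda>\<xi>. (norm (\<Sum>t\<in>S. \<theta> t *\<^sub>R n t \<xi>))\<^sup>2) \<in> borel_measurable M"
    using mn by measurable
  show iN: "integrable M (\<lambda>\<xi>. (norm (\<Sum>t\<in>S. \<theta> t *\<^sub>R n t \<xi>))\<^sup>2)"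
    by (rule Bochner_Integration.integrable_bound[OF iB mN]) (use pw in \<open>auto intro!: AE_I2 order_trans[OF _ abs_ge_self]\<close>)
  have "(\<integral>\<xi>. (norm (\<Sum>t\<in>S. \<theta> t *\<^sub>R n t \<xi>))\<^sup>2 \<partial>M) \<le> (\<integral>\<xi>. B \<xi> \<partial>M)"
    by (rule Bochner_Integration.integral_mono[OF iN iB pw])
  also have "\<dots> = real (card S) * (\<Sum>t\<in>S. (\<theta> t)\<^sup>2 * (\<integral>\<xi>. (norm (n t \<xi>))\<^sup>2 \<partial>M))"
    unfolding B_def using iV by simp
  also have "\<dots> \<le> real (card S) * (\<Sum>t\<in>S. (\<theta> t)\<^sup>2 * \<sigma>\<^sup>2)"
    using eV by (intro mult_left_mono sum_mono) auto
  finally show "(\<integral>\<xi>. (norm (\<Sum>t\<in>S. \<theta> t *\<^sub>R n t \<xi>))\<^sup>2 \<partial>M) \<le> real (card S) * \<sigma>\<^sup>2 * (\<Sum>t\<in>S. (\<theta> t)\<^sup>2)"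
    by (simp add: sum_distrib_left sum_distrib_right mult_ac)
qed

lemma integral_sq_norm_bias_plus_noise_le:
  fixes G :: "'a::euclidean_space \<Rightarrow> 'c \<Rightarrow> 'a"
  assumes P: "prob_space M" and fin: "finite S"
    and iG: "\<And>x. integrable M (G x)" and eG: "\<And>x. (\<integral>\<xi>. G x \<xi> \<partial>M) = gradf x"
    and iV: "\<And>x. integrable M (\<lambda>\<xi>. (norm (G x \<xi> - gradf x))\<^sup>2)"
    and eV: "\<And>x. (\<integral>\<xi>. (norm (G x \<xi> - gradf x))\<^sup>2 \<partial>M) \<le> \<sigma>\<^sup>2"
  shows "integrable M (\<lambda>\<xi>. (norm (a + (\<Sum>t\<in>S. \<theta> t *\<^sub>R (G (z t) \<xi> - gradf (z t)))))\<^sup>2)"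
    and "(\<integral>\<xi>. (norm (a + (\<Sum>t\<in>S. \<theta> t *\<^sub>R (G (z t) \<xi> - gradf (z t)))))\<^sup>2 \<partial>M)
       \<le> (norm a)\<^sup>2 + real (card S) * \<sigma>\<^sup>2 * (\<Sum>t\<in>S. (\<theta> t)\<^sup>2)"
proof -
  interpret prob_space M by (rule P)
  define n where "n t \<xi> = G (z t) \<xi> - gradf (z t)" for t \<xi>
  have int_n: "integrable M (n t)" for t
    unfolding n_def using iG by simp
  have e_n: "(\<integral>\<xi>. n t \<xi> \<partial>M) = 0" for t
    unfolding n_def using iG eG by (simp add: prob_space)
  define N where "N \<xi> = (\<Sum>t\<in>S. \<theta> t *\<^sub>R n t \<xi>)" for \<xi>
  have eN: "(\<integral>\<xi>. N \<xi> \<partial>M) = 0"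
    unfolding N_def using int_n e_n by simp
  have iN: "integrable M N"
    unfolding N_def using int_n by auto
  have mn: "n t \<in> borel_measurable M" for t
    using int_n by (rule borel_measurable_integrable)
  have iVn: "integrable M (\<lambda>\<xi>. (norm (n t \<xi>))\<^sup>2)" and eVn: "(\<integral>\<xi>. (norm (n t \<xi>))\<^sup>2 \<partial>M) \<le> \<sigma>\<^sup>2" for t
    unfolding n_def using iV eV by auto
  have iN2: "integrable M (\<lambda>\<xi>. (norm (N \<xi>))\<^sup>2)"
    unfolding N_def by (rule integral_sq_norm_weighted_sum_le(1)[OF fin mn iVn eVn])
  have eN2: "(\<integral>\<xi>. (norm (N \<xi>))\<^sup>2 \<partial>M) \<le> real (card S) * \<sigma>\<^sup>2 * (\<Sum>t\<in>S. (\<theta> t)\<^sup>2)"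
    unfolding N_def by (rule integral_sq_norm_weighted_sum_le(2)[OF fin mn iVn eVn])
  have "integrable M (\<lambda>\<xi>. (norm (a + N \<xi>))\<^sup>2)"
    and "(\<integral>\<xi>. (norm (a + N \<xi>))\<^sup>2 \<partial>M) \<le> (norm a)\<^sup>2 + real (card S) * \<sigma>\<^sup>2 * (\<Sum>t\<in>S. (\<theta> t)\<^sup>2)"
    using integral_sq_norm_add_centered[OF P iN eN iN2, of a] eN2 by auto
  then show "integrable M (\<lambda>\<xi>. (norm (a + (\<Sum>t\<in>S. \<theta> t *\<^sub>R (G (z t) \<xi> - gradf (z t)))))\<^sup>2)"
    and "(\<integral>\<xi>. (norm (a + (\<Sum>t\<in>S. \<theta> t *\<^sub>R (G (z t) \<xi> - gradf (z t)))))\<^sup>2 \<partial>M)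
       \<le> (norm a)\<^sup>2 + real (card S) * \<sigma>\<^sup>2 * (\<Sum>t\<in>S. (\<theta> t)\<^sup>2)"
    by (simp_all add: N_def n_def)
qed

text \<open>Convexity of squaring, applied to \<open>(1 - \<Theta>) A + \<Theta> (B / \<Theta>)\<close>.\<close>
lemma sq_convex_comb_le:
  fixes A B \<Theta> :: real
  assumes "0 < \<Theta>" "\<Theta> \<le> 1"
  shows "((1 - \<Theta>) * A + B)\<^sup>2 \<le> (1 - \<Theta>) * A\<^sup>2 + B\<^sup>2 / \<Theta>"
proof -
  have "\<Theta> * ((1 - \<Theta>) * A + B)\<^sup>2 \<le> \<Theta> * ((1 - \<Theta>) * A\<^sup>2) + B\<^sup>2"
  proof -
    have "\<Theta> * ((1 - \<Theta>) * A\<^sup>2) + B\<^sup>2 - \<Theta> * ((1 - \<Theta>) * A + B)\<^sup>2 = (1 - \<Theta>) * (\<Theta> * A - B)\<^sup>2"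
      by (simp add: power2_eq_square algebra_simps)
    moreover have "(1 - \<Theta>) * (\<Theta> * A - B)\<^sup>2 \<ge> 0" using assms by simp
    ultimately show ?thesis by linarith
  qed
  then have "((1 - \<Theta>) * A + B)\<^sup>2 \<le> (\<Theta> * ((1 - \<Theta>) * A\<^sup>2) + B\<^sup>2) / \<Theta>"
    using assms by (simp add: field_simps)
  also have "\<dots> = (1 - \<Theta>) * A\<^sup>2 + B\<^sup>2 / \<Theta>" using assms by (simp add: field_simps)
  finally show ?thesis .
qed

lemma mom_step_Suc:
  "mom_step G q gam th (Suc k) \<xi> x xp mp
    = (1 - (\<Sum>t\<in>{1..q}. th k t)) *\<^sub>R mp
      + (\<Sum>t\<in>{1..q}. th k t *\<^sub>R G (x + ((1 - gam k t) / gam k t) *\<^sub>R (x - xp)) \<xi>)"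
  by (simp add: mom_step_def gprev_def tprev_def)

lemma mom_step_error_expectation_le:
  fixes f :: "'a::euclidean_space \<Rightarrow> real" and G :: "'a \<Rightarrow> 'c \<Rightarrow> 'a"
    and gradf :: "'a \<Rightarrow> 'a" and gam th :: "nat \<Rightarrow> nat \<Rightarrow> real" and p k :: nat
    and x m u :: 'a and \<eta> :: real
  defines "\<Theta> \<equiv> \<Sum>t\<in>{1..p-1}. th k t"
    and "e \<xi> \<equiv> mom_step G (p-1) gam th (Suc k) \<xi> (x + \<eta> *\<^sub>R u) x m - gradf (x + \<eta> *\<^sub>R u)"
  assumes probM: "prob_space M"
    and grad: "\<And>x. (f has_derivative (\<lambda>h. gradf x \<bullet> h)) (at x)"
    and iG: "\<And>x. integrable M (G x)" and eG: "\<And>x. (\<integral>\<xi>. G x \<xi> \<partial>M) = gradf x"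
    and iV: "\<And>x. integrable M (\<lambda>\<xi>. (norm (G x \<xi> - gradf x))\<^sup>2)"
    and eV: "\<And>x. (\<integral>\<xi>. (norm (G x \<xi> - gradf x))\<^sup>2 \<partial>M) \<le> \<sigma>\<^sup>2"
    and p2: "p \<ge> 2" and cp: "Cp p f"
    and Lip: "\<And>x y. pnorm p (\<lambda>h. hderiv p f y h - hderiv p f x h) \<le> Lp * norm (y - x)"
    and gam: "\<And>t. t \<in> {1..p-1} \<Longrightarrow> 0 < gam k t \<and> gam k t < 1"
    and mom: "\<And>i. i \<in> {1..p-1} \<Longrightarrow> (\<Sum>t\<in>{1..p-1}. th k t / gam k t ^ i) = 1"
    and \<Theta>: "0 < \<Theta>" "\<Theta> < 1"
    and u: "norm u = 1" and eta: "\<eta> > 0"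
  shows "integrable M (\<lambda>\<xi>. (norm (e \<xi>))\<^sup>2)"
    and "(\<integral>\<xi>. (norm (e \<xi>))\<^sup>2 \<partial>M)
      \<le> (1 - \<Theta>) * (norm (m - gradf x))\<^sup>2
        + real p * Lp\<^sup>2 * \<eta> ^ (2 * p) / ((fact p)\<^sup>2 * \<Theta>) * (1 + (\<Sum>t\<in>{1..p-1}. (th k t)\<^sup>2 / gam k t ^ (2 * p)))
        + (real p - 1) * \<sigma>\<^sup>2 * (\<Sum>t\<in>{1..p-1}. (th k t)\<^sup>2)"
proof -
  define y where "y = x + \<eta> *\<^sub>R u"
  define S where "S = {1..p-1}"
  define \<theta> where "\<theta> = th k"
  define \<gamma> where "\<gamma> = gam k"
  define c where "c t = (1 - \<gamma> t) / \<gamma> t" for t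
  define z where "z t = y + (c t * \<eta>) *\<^sub>R u" for t
  define R where "R = (1 - \<Theta>) *\<^sub>R (gradf (y + (- \<eta>) *\<^sub>R u) - gradf y)
    + (\<Sum>t\<in>S. \<theta> t *\<^sub>R (gradf (z t) - gradf y))"
  define a where "a = (1 - \<Theta>) *\<^sub>R (m - gradf x) + R"
  have \<Theta>_eq: "\<Theta> = sum \<theta> S" by (simp add: \<Theta>_def \<theta>_def S_def)
  have x_eq: "y + (- \<eta>) *\<^sub>R u = x" by (simp add: y_def)
  have e_eq: "e \<xi> = a + (\<Sum>t\<in>S. \<theta> t *\<^sub>R (G (z t) \<xi> - gradf (z t)))" for \<xi>
  proof -
    have "mom_step G (p-1) gam th (Suc k) \<xi> y x m = (1 - \<Theta>) *\<^sub>R m + (\<Sum>t\<in>S. \<theta> t *\<^sub>R G (z t) \<xi>)"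
      by (simp add: mom_step_Suc \<Theta>_def S_def \<theta>_def z_def c_def \<gamma>_def y_def)
    moreover have "\<Theta> *\<^sub>R gradf y = (\<Sum>t\<in>S. \<theta> t *\<^sub>R gradf y)"
      by (simp add: \<Theta>_eq scaleR_sum_left)
    ultimately show ?thesis
      unfolding e_def y_def[symmetric] a_def R_def x_eq
      by (simp add: algebra_simps sum.distrib sum_subtractf)
  qed
  have fin: "finite S" by (simp add: S_def)
  have card: "real (card S) = real p - 1" using p2 by (simp add: S_def of_nat_diff)
  show "integrable M (\<lambda>\<xi>. (norm (e \<xi>))\<^sup>2)"
    unfolding e_eq by (rule integral_sq_norm_bias_plus_noise_le(1)[OF probM fin iG eG iV eV])
  have noise: "(\<integral>\<xi>. (norm (e \<xi>))\<^sup>2 \<partial>M) \<le> (norm a)\<^sup>2 + real (card S) * \<sigma>\<^sup>2 * (\<Sum>t\<in>S. (\<theta> t)\<^sup>2)"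
    unfolding e_eq by (rule integral_sq_norm_bias_plus_noise_le(2)[OF probM fin iG eG iV eV])
  have "(norm R)\<^sup>2
      \<le> real p * Lp\<^sup>2 * \<eta> ^ (2 * p) / (fact p)\<^sup>2 * (1 + (\<Sum>t\<in>S. (\<theta> t)\<^sup>2 / \<gamma> t ^ (2 * p)))"
    unfolding R_def \<Theta>_eq S_def z_def c_def
    by (rule extrapolated_gradient_error_sq_le[OF cp p2 grad Lip u eta])
      (use gam mom \<Theta> in \<open>auto simp: \<gamma>_def \<theta>_def \<Theta>_eq S_def\<close>)
  then have R2: "(norm R)\<^sup>2 / \<Theta>
      \<le> real p * Lp\<^sup>2 * \<eta> ^ (2 * p) / ((fact p)\<^sup>2 * \<Theta>) * (1 + (\<Sum>t\<in>S. (\<theta> t)\<^sup>2 / \<gamma> t ^ (2 * p)))"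
    using \<Theta> by (auto dest: divide_right_mono[of _ _ \<Theta>] simp: divide_divide_eq_left)
  have "norm a \<le> (1 - \<Theta>) * norm (m - gradf x) + norm R"
    unfolding a_def using \<Theta> norm_triangle_ineq[of "(1 - \<Theta>) *\<^sub>R (m - gradf x)" R] by simp
  then have "(norm a)\<^sup>2 \<le> ((1 - \<Theta>) * norm (m - gradf x) + norm R)\<^sup>2"
    by (intro power_mono) auto
  also have "\<dots> \<le> (1 - \<Theta>) * (norm (m - gradf x))\<^sup>2 + (norm R)\<^sup>2 / \<Theta>"
    using \<Theta> by (intro sq_convex_comb_le) auto
  finally show "(\<integral>\<xi>. (norm (e \<xi>))\<^sup>2 \<partial>M)
      \<le> (1 - \<Theta>) * (norm (m - gradf x))\<^sup>2
        + real p * Lp\<^sup>2 * \<eta> ^ (2 * p) / ((fact p)\<^sup>2 * \<Theta>) * (1 + (\<Sum>t\<in>{1..p-1}. (th k t)\<^sup>2 / gam k t ^ (2 * p)))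
        + (real p - 1) * \<sigma>\<^sup>2 * (\<Sum>t\<in>{1..p-1}. (th k t)\<^sup>2)"
    using noise R2 card by (simp add: S_def \<theta>_def \<gamma>_def)
qed

section \<open>Descent along the normalized momentum\<close>

lemma has_real_derivative_on_line:
  assumes grad: "\<And>x. (f has_derivative (\<lambda>h. gradf x \<bullet> h)) (at x)"
  shows "((\<lambda>t. f (x + t *\<^sub>R d)) has_real_derivative (gradf (x + t *\<^sub>R d) \<bullet> d)) (at t)"
proof -
  have dp: "((\<lambda>t. x + t *\<^sub>R d) has_derivative (\<lambda>s. s *\<^sub>R d)) (at t)"
    by (auto intro!: derivative_eq_intros)
  have "((f \<circ> (\<lambda>t. x + t *\<^sub>R d)) has_derivative ((\<lambda>h. gradf (x + t *\<^sub>R d) \<bullet> h) \<circ> (\<lambda>s. s *\<^sub>R d))) (at t)"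
    by (rule diff_chain_at[OF dp grad])
  moreover have "((\<lambda>h. gradf (x + t *\<^sub>R d) \<bullet> h) \<circ> (\<lambda>s. s *\<^sub>R d)) = (*) (gradf (x + t *\<^sub>R d) \<bullet> d)"
    by (simp add: fun_eq_iff mult.commute)
  ultimately show ?thesis
    unfolding has_field_derivative_def by (simp add: comp_def)
qed

lemma lipschitz_gradient_upper_bound:
  fixes f :: "'a::euclidean_space \<Rightarrow> real"
  assumes grad: "\<And>x. (f has_derivative (\<lambda>h. gradf x \<bullet> h)) (at x)"
    and L: "\<And>x y. norm (gradf y - gradf x) \<le> L1 * norm (y - x)"
  shows "f (x + d) \<le> f x + gradf x \<bullet> d + L1 / 2 * (norm d)\<^sup>2"
proof -
  define phi where "phi t = f (x + t *\<^sub>R d) - t * (gradf x \<bullet> d) - L1 / 2 * t\<^sup>2 * (norm d)\<^sup>2" for t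
  have "phi 1 \<le> phi 0"
  proof (rule DERIV_nonpos_imp_nonincreasing[of 0 1])
    fix t :: real assume t: "0 \<le> t" "t \<le> 1"
    have D: "(phi has_real_derivative (gradf (x + t *\<^sub>R d) \<bullet> d - gradf x \<bullet> d - L1 / 2 * (2 * t) * (norm d)\<^sup>2)) (at t)"
      unfolding phi_def using has_real_derivative_on_line[OF grad, of x d t]
      by (auto intro!: derivative_eq_intros)
    have "gradf (x + t *\<^sub>R d) \<bullet> d - gradf x \<bullet> d = (gradf (x + t *\<^sub>R d) - gradf x) \<bullet> d"
      by (simp add: inner_diff_left)
    also have "\<dots> \<le> norm (gradf (x + t *\<^sub>R d) - gradf x) * norm d" by (rule norm_cauchy_schwarz)
    also have "\<dots> \<le> L1 * norm (t *\<^sub>R d) * norm d"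
      using L[of "x + t *\<^sub>R d" x] by (intro mult_right_mono) auto
    also have "\<dots> = L1 * t * (norm d)\<^sup>2" using t by (simp add: power2_eq_square)
    finally show "\<exists>y. (phi has_real_derivative y) (at t) \<and> y \<le> 0"
      using D by (intro exI[of _ "gradf (x + t *\<^sub>R d) \<bullet> d - gradf x \<bullet> d - L1 / 2 * (2 * t) * (norm d)\<^sup>2"]) auto
  qed simp
  then show ?thesis unfolding phi_def by simp
qed

lemma inner_normalized_le:
  fixes g m :: "'a::real_inner"
  assumes "m \<noteq> 0"
  shows "- (g \<bullet> m) / norm m \<le> - norm g + 2 * norm (m - g)"
proof -
  define e where "e = m - g"
  have "g \<bullet> m = (norm m)\<^sup>2 - e \<bullet> m"
    by (simp add: e_def inner_diff_left power2_norm_eq_inner)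
  moreover have "e \<bullet> m \<le> norm e * norm m" by (rule norm_cauchy_schwarz)
  ultimately have "g \<bullet> m \<ge> norm m * (norm m - norm e)" by (simp add: power2_eq_square algebra_simps)
  moreover have "norm m > 0" using assms by simp
  ultimately have "(g \<bullet> m) / norm m \<ge> norm m - norm e"
    by (simp add: field_simps)
  moreover have "norm g \<le> norm m + norm e"
    using norm_triangle_ineq4[of m e] by (simp add: e_def)
  ultimately show ?thesis unfolding e_def by linarith
qed

lemma normalized_step_descent:
  fixes f :: "'a::euclidean_space \<Rightarrow> real"
  assumes grad: "\<And>x. (f has_derivative (\<lambda>h. gradf x \<bullet> h)) (at x)"
    and L: "\<And>x y. norm (gradf y - gradf x) \<le> L1 * norm (y - x)"
    and "m \<noteq> 0" and "\<eta> \<ge> 0"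
  shows "f (x - (\<eta> / norm m) *\<^sub>R m)
    \<le> f x - \<eta> * norm (gradf x) + 2 * \<eta> * norm (m - gradf x) + L1 / 2 * \<eta>\<^sup>2"
proof -
  have step: "x - (\<eta> / norm m) *\<^sub>R m = x + \<eta> *\<^sub>R (- m /\<^sub>R norm m)"
    by (simp add: divide_inverse)
  have "f (x + \<eta> *\<^sub>R (- m /\<^sub>R norm m))
      \<le> f x + gradf x \<bullet> (\<eta> *\<^sub>R (- m /\<^sub>R norm m)) + L1 / 2 * (norm (\<eta> *\<^sub>R (- m /\<^sub>R norm m)))\<^sup>2"
    by (rule lipschitz_gradient_upper_bound[OF grad L])
  also have "gradf x \<bullet> (\<eta> *\<^sub>R (- m /\<^sub>R norm m)) = \<eta> * (- (gradf x \<bullet> m) / norm m)"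
    by (simp add: inner_scaleR_right divide_inverse)
  also have "norm (\<eta> *\<^sub>R (- m /\<^sub>R norm m)) = \<eta>"
    using assms(3,4) by simp
  also have "\<eta> * (- (gradf x \<bullet> m) / norm m) \<le> \<eta> * (- norm (gradf x) + 2 * norm (m - gradf x))"
    using inner_normalized_le[OF assms(3), of "gradf x"] assms(4) by (rule mult_left_mono)
  finally show ?thesis unfolding step by (simp add: algebra_simps)
qed

section \<open>The Lyapunov inequality\<close>

lemma alg_state_fun_upd:
  "j \<le> i \<Longrightarrow> alg_state G x0 \<eta> q gam th (s(i := \<xi>)) j = alg_state G x0 \<eta> q gam th s j"
  by (induction j) (auto split: prod.splits simp: Let_def)

lemma xseq_mseq_resample_Suc:
  fixes G :: "'a::euclidean_space \<Rightarrow> 'c \<Rightarrow> 'a" and x0 :: 'a and \<eta> :: "nat \<Rightarrow> real"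
    and q k :: nat and gam th :: "nat \<Rightarrow> nat \<Rightarrow> real" and s :: "nat \<Rightarrow> 'c"
  defines "x \<equiv> xseq G x0 \<eta> q gam th s k" and "m \<equiv> mseq G x0 \<eta> q gam th s k"
  shows "xseq G x0 \<eta> q gam th (s(Suc k := \<xi>)) (Suc k) = x - (\<eta> k / norm m) *\<^sub>R m"
    and "mseq G x0 \<eta> q gam th (s(Suc k := \<xi>)) (Suc k)
      = mom_step G q gam th (Suc k) \<xi> (x - (\<eta> k / norm m) *\<^sub>R m) x m"
  using alg_state_fun_upd[of k "Suc k" G x0 \<eta> q gam th s \<xi>]
  by (simp_all add: x_def m_def xseq_def mseq_def Let_def split: prod.splits)

text \<open>The cross term \<open>2 \<eta> E\<close> is split by Young's inequality with weight
  \<open>\<Theta> q / r\<close>, which the decay condition on \<open>q\<close> absorbs exactly.\<close>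
lemma lyapunov_step_combine:
  fixes fx fy g E I K \<eta> L \<Theta> q q' r :: real
  assumes descent: "fy \<le> fx - \<eta> * g + 2 * \<eta> * E + L / 2 * \<eta>\<^sup>2"
    and error: "I \<le> (1 - \<Theta>) * E\<^sup>2 + K"
    and decay: "(1 - \<Theta>) * q' \<le> (1 - \<Theta> / r) * q"
    and pos: "0 < q" "0 < q'" "0 < \<Theta>" "0 < r"
  shows "fy + q' * I \<le> fx + q * E\<^sup>2 - \<eta> * g + L / 2 * \<eta>\<^sup>2 + r * \<eta>\<^sup>2 / (q * \<Theta>) + q' * K"
proof -
  define \<alpha> where "\<alpha> = \<Theta> * q / r"
  have "\<alpha> > 0" using pos by (simp add: \<alpha>_def)
  then have young: "2 * \<eta> * E \<le> \<alpha> * E\<^sup>2 + \<eta>\<^sup>2 / \<alpha>"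
    using sum_squares_ge_zero[of "\<alpha> * E - \<eta>" 0]
    by (simp add: field_simps power2_eq_square)
  have "q' * I \<le> q' * ((1 - \<Theta>) * E\<^sup>2) + q' * K"
    using mult_left_mono[OF error, of q'] pos by (simp add: distrib_left)
  also have "q' * ((1 - \<Theta>) * E\<^sup>2) \<le> (q - \<alpha>) * E\<^sup>2"
    using mult_right_mono[OF decay, of "E\<^sup>2"] by (simp add: \<alpha>_def algebra_simps)
  finally show ?thesis
    using descent young pos by (simp add: \<alpha>_def algebra_simps)
qed

lemma expected_lyapunov_step:
  fixes f :: "'a::euclidean_space \<Rightarrow> real" and G :: "'a \<Rightarrow> 'c \<Rightarrow> 'a"
    and gradf :: "'a \<Rightarrow> 'a" and gam th :: "nat \<Rightarrow> nat \<Rightarrow> real" and p k :: nat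
    and x m :: 'a and \<eta> q q' :: real
  defines "\<Theta> \<equiv> \<Sum>t\<in>{1..p-1}. th k t" and "y \<equiv> x - (\<eta> / norm m) *\<^sub>R m"
  assumes probM: "prob_space M"
    and grad: "\<And>x. (f has_derivative (\<lambda>h. gradf x \<bullet> h)) (at x)"
    and L1: "\<And>x y. norm (gradf y - gradf x) \<le> L1 * norm (y - x)"
    and iG: "\<And>x. integrable M (G x)" and eG: "\<And>x. (\<integral>\<xi>. G x \<xi> \<partial>M) = gradf x"
    and iV: "\<And>x. integrable M (\<lambda>\<xi>. (norm (G x \<xi> - gradf x))\<^sup>2)"
    and eV: "\<And>x. (\<integral>\<xi>. (norm (G x \<xi> - gradf x))\<^sup>2 \<partial>M) \<le> \<sigma>\<^sup>2"
    and p2: "p \<ge> 2" and cp: "Cp p f"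
    and Lip: "\<And>x y. pnorm p (\<lambda>h. hderiv p f y h - hderiv p f x h) \<le> Lp * norm (y - x)"
    and gam: "\<And>t. t \<in> {1..p-1} \<Longrightarrow> 0 < gam k t \<and> gam k t < 1"
    and mom: "\<And>i. i \<in> {1..p-1} \<Longrightarrow> (\<Sum>t\<in>{1..p-1}. th k t / gam k t ^ i) = 1"
    and \<Theta>: "0 < \<Theta>" "\<Theta> < 1"
    and "m \<noteq> 0" and "\<eta> > 0"
    and q_pos: "0 < q" "0 < q'" and decay: "(1 - \<Theta>) * q' \<le> (1 - 1 / (real p + 1) * \<Theta>) * q"
  shows "(\<integral>\<xi>. f y + q' * (norm (mom_step G (p-1) gam th (Suc k) \<xi> y x m - gradf y))\<^sup>2 \<partial>M)
    \<le> f x + q * (norm (m - gradf x))\<^sup>2 - \<eta> * norm (gradf x) + L1 / 2 * \<eta>\<^sup>2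
      + (real p + 1) * \<eta>\<^sup>2 / (q * \<Theta>)
      + real p * Lp\<^sup>2 * \<eta> ^ (2 * p) * q' / ((fact p)\<^sup>2 * \<Theta>)
          * (1 + (\<Sum>t\<in>{1..p-1}. (th k t)\<^sup>2 / gam k t ^ (2 * p)))
      + (real p - 1) * \<sigma>\<^sup>2 * q' * (\<Sum>t\<in>{1..p-1}. (th k t)\<^sup>2)"
proof -
  define u where "u = - m /\<^sub>R norm m"
  have u: "norm u = 1" using \<open>m \<noteq> 0\<close> by (simp add: u_def)
  have y_eq: "y = x + \<eta> *\<^sub>R u" by (simp add: y_def u_def divide_inverse)
  define e where "e \<xi> = mom_step G (p-1) gam th (Suc k) \<xi> y x m - gradf y" for \<xi>
  define K where "K = real p * Lp\<^sup>2 * \<eta> ^ (2 * p) / ((fact p)\<^sup>2 * \<Theta>)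
      * (1 + (\<Sum>t\<in>{1..p-1}. (th k t)\<^sup>2 / gam k t ^ (2 * p)))
    + (real p - 1) * \<sigma>\<^sup>2 * (\<Sum>t\<in>{1..p-1}. (th k t)\<^sup>2)"
  have error: "integrable M (\<lambda>\<xi>. (norm (e \<xi>))\<^sup>2)"
    "(\<integral>\<xi>. (norm (e \<xi>))\<^sup>2 \<partial>M) \<le> (1 - \<Theta>) * (norm (m - gradf x))\<^sup>2 + K"
    using mom_step_error_expectation_le[where M=M and gam=gam and th=th and k=k and x=x and m=m,
      OF probM grad iG eG iV eV p2 cp Lip _ _ \<Theta>[unfolded \<Theta>_def] u \<open>\<eta> > 0\<close>] gam mom
    unfolding e_def y_eq K_def \<Theta>_def by (simp_all add: add.assoc)
  have expectation: "(\<integral>\<xi>. f y + q' * (norm (e \<xi>))\<^sup>2 \<partial>M) = f y + q' * (\<integral>\<xi>. (norm (e \<xi>))\<^sup>2 \<partial>M)"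
    using error(1) prob_space.prob_space[OF probM]
      finite_measure.integrable_const[OF prob_space.finite_measure[OF probM]]
    by (subst Bochner_Integration.integral_add) auto
  have descent: "f y \<le> f x - \<eta> * norm (gradf x) + 2 * \<eta> * norm (m - gradf x) + L1 / 2 * \<eta>\<^sup>2"
    unfolding y_def using normalized_step_descent[OF grad L1 \<open>m \<noteq> 0\<close>] \<open>\<eta> > 0\<close> by simp
  have "(1 - \<Theta>) * q' \<le> (1 - \<Theta> / (real p + 1)) * q"
    using decay by simp
  from lyapunov_step_combine[OF descent error(2) this q_pos \<Theta>(1)] show ?thesis
    unfolding e_def[symmetric] expectation by (simp add: K_def algebra_simps add_divide_distrib)
qed

theorem theorem3p7:
  fixes f :: "'a::euclidean_space \<Rightarrow> real"
    and gradf :: "'a \<Rightarrow> 'a"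
    and M :: "'c measure"
    and G :: "'a \<Rightarrow> 'c \<Rightarrow> 'a"
    and flow L1 Lp \<sigma> :: real
    and p :: nat
    and x0 :: 'a
    and \<eta> :: "nat \<Rightarrow> real"
    and gam th :: "nat \<Rightarrow> nat \<Rightarrow> real"
    and pp :: "nat \<Rightarrow> real"
    and s :: "nat \<Rightarrow> 'c"
    and k :: nat
  assumes probM: "prob_space M"
    and grad: "\<And>x. (f has_derivative (\<lambda>h. gradf x \<bullet> h)) (at x)"
    and A_low: "\<And>x. f x \<ge> flow"
    and A_L1: "L1 > 0" "\<And>x y. norm (gradf y - gradf x) \<le> L1 * norm (y - x)"
    and A_unb: "\<And>x. integrable M (G x)" "\<And>x. (\<integral>\<xi>. G x \<xi> \<partial>M) = gradf x"
    and A_var: "\<sigma> > 0" "\<And>x. integrable M (\<lambda>\<xi>. (norm (G x \<xi> - gradf x))\<^sup>2)"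
      "\<And>x. (\<integral>\<xi>. (norm (G x \<xi> - gradf x))\<^sup>2 \<partial>M) \<le> \<sigma>\<^sup>2"
    and B_p: "p \<ge> 2" and B_Cp: "Cp p f" and B_Lp: "Lp > 0"
      "\<And>x y. pnorm p (\<lambda>h. hderiv p f y h - hderiv p f x h) \<le> Lp * norm (y - x)"
    and eta_pos: "\<And>j. \<eta> j > 0"
    and gam_range: "\<And>j t. t \<in> {1..p-1} \<Longrightarrow> gam j t > 0 \<and> gam j t < 1"
    and th_sum: "\<And>j. (\<Sum>t\<in>{1..p-1}. th j t) > 0 \<and> (\<Sum>t\<in>{1..p-1}. th j t) < 1"
    and th_moment: "\<And>j i. i \<in> {1..p-1} \<Longrightarrow> (\<Sum>t\<in>{1..p-1}. th j t / gam j t ^ i) = 1"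
    and pp_pos: "\<And>j. pp j > 0"
    and pp_rec: "\<And>j. (1 - (\<Sum>t\<in>{1..p-1}. th j t)) * pp (Suc j)
                    \<le> (1 - (1 / (real p + 1)) * (\<Sum>t\<in>{1..p-1}. th j t)) * pp j"
    and s_in: "\<And>j. s j \<in> space M"
    and m_nz: "\<And>j. j \<le> k \<Longrightarrow> mseq G x0 \<eta> (p-1) gam th s j \<noteq> 0"
  shows
    "(let X = xseq G x0 \<eta> (p-1) gam th;
          Mo = mseq G x0 \<eta> (p-1) gam th;
          P = (\<lambda>j s'. f (X s' j) + pp j * (norm (Mo s' j - gradf (X s' j)))\<^sup>2);
          \<Theta> = (\<Sum>t\<in>{1..p-1}. th k t)
      in (\<integral>\<xi>. P (Suc k) (s(Suc k := \<xi>)) \<partial>M)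
         \<le> P k s - \<eta> k * norm (gradf (X s k)) + L1 / 2 * (\<eta> k)\<^sup>2
           + (real p + 1) * (\<eta> k)\<^sup>2 / (pp k * \<Theta>)
           + real p * Lp\<^sup>2 * \<eta> k ^ (2 * p) * pp (Suc k) / ((fact p)\<^sup>2 * \<Theta>)
               * (1 + (\<Sum>t\<in>{1..p-1}. (th k t)\<^sup>2 / gam k t ^ (2 * p)))
           + (real p - 1) * \<sigma>\<^sup>2 * pp (Suc k) * (\<Sum>t\<in>{1..p-1}. (th k t)\<^sup>2))"
proof -
  have "mseq G x0 \<eta> (p-1) gam th s k \<noteq> 0" using m_nz by simp
  then show ?thesis
    using expected_lyapunov_step[where M=M and f=f and G=G and gradf=gradf and \<sigma>=\<sigma> and Lp=Lp
        and gam=gam and th=th and k=k and \<eta>="\<eta> k" and q="pp k" and q'="pp (Suc k)",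
      OF probM grad A_L1(2) A_unb A_var(2,3) B_p B_Cp B_Lp(2) _ _ _ _ _ eta_pos pp_pos pp_pos pp_rec]
      gam_range th_moment th_sum
    by (simp add: Let_def xseq_mseq_resample_Suc)
qed

end
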